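(* In the setting of the context (problem, KKT point $x^*$ satisfying LICQ, strict complementarity and strong second-order sufficiency, unique multiplier $\lambda^*$, $w^*=(x^*,\lambda^* )$), for all $\mu\in\mathbb{R}$ and $r\in\mathbb{R}^{n+m}$ independently sufficiently small there exists a function $w^{w^*,\mu,r}\colon\mathbb{R}\to\mathbb{R}^{n+m}$, $(d-1)$ times continuously differentiable on a neighborhood of $\rho\in[0,\|r\|]$, such that locally $$F^\mu\bigl(w^{w^*,\mu,r}(\rho)\bigr)=\rho\,\mathrm{nml}(r)\quad\text{and}\quad w^{w^*,\mu,r}(0)=w^{w^*}(\mu).$$
   Context: Problem: minimize $f(x)$ subject to $c_{\mathcal I}(x)\ge0$, $c_{\mathcal E}(x)=0$, with $f,c_i\colon\mathbb{R}^n\to\mathbb{R}$, $c=(c_{\mathcal I}^T,c_{\mathcal E}^T)^T\in\mathbb{R}^m$, and $d\ge3$ the smallest number of times each of $f,c_1,\dots,c_m$ is continuously differentiable. Notation: $g=\nabla f$, $A$ the Jacobian of $c$, $H(x,\lambda)$ the Hessian in $x$ of $f(x)-\lambda^Tc(x)$, $[v]_S$ components of $v$ indexed by $S$, uppercase = diagonal matrix of the lowercase vector, $e$ the all-ones vector, $w=(x,\lambda)$. $F^\mu(x,\lambda)=\bigl(g(x)-A(x)^T\lambda;\ C_{\mathcal I}(x)[\lambda]_{\mathcal I}-\mu e;\ c_{\mathcal E}(x)\bigr)$. Assumptions at $x^*$ with active set $\mathcal A(x^* )=\{i: c_i(x^* )=0\}$: LICQ (active constraint gradients linearly independent); strict complementarity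 (there is $\lambda^*$ with $g(x^* )=A(x^* )^T\lambda^*$, $C_{\mathcal I}(x^* )[\lambda^*]_{\mathcal I}=0$, $[\lambda^*]_{\mathcal I}\ge0$, $[\lambda^*]_i>0$ for $i\in\mathcal I\cap\mathcal A(x^* )$); strong second-order sufficiency (some $\omega>0$ with $p^TH(x^*,\lambda^* )p\ge\omega\|p\|^2$ whenever $\nabla c_i(x^* )^Tp=0$ for all $i\in\mathcal A(x^* )$). Let $w^{w^*,0}$ be the locally unique function, $(d-1)$ times continuously differentiable near $0$, with $F^0(w^{w^*,0}(r))=r$ locally and $w^{w^*,0}(0)=w^*$ (it exists by the implicit function theorem under these assumptions). The barrier trajectory is $w^{w^*}(\mu)=w^{w^*,0}\bigl((0,\mu e^T,0)^T\bigr)$, with blocks of sizes $n,m_{\mathcal I},m_{\mathcal E}$. For $r\in\mathbb{R}^{n+m}$, $\mathrm{nml}(r)=r/\|r\|$ if $r\neq0$ and $\mathrm{nml}(0)=0$. *)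

theory Defs
  imports "HOL-Analysis.Analysis"
begin

fun Ck_on :: "'a::real_normed_vector set \<Rightarrow> ('a \<Rightarrow> 'b::real_normed_vector) \<Rightarrow> nat \<Rightarrow> bool" where
  "Ck_on S g 0 \<longleftrightarrow> continuous_on S g"
| "Ck_on S g (Suc k) \<longleftrightarrow> (\<forall>x\<in>S. g differentiable (at x)) \<and>
      (\<forall>v. Ck_on S (\<lambda>x. frechet_derivative g (at x) v) k)"

definition grad :: "(real^'n \<Rightarrow> real) \<Rightarrow> real^'n \<Rightarrow> real^'n" where
  "grad \<phi> x = (\<chi> j. frechet_derivative \<phi> (at x) (axis j 1))"

definition jac :: "(real^'n \<Rightarrow> real^'m) \<Rightarrow> real^'n \<Rightarrow> real^'n^'m" where
  "jac c x = (\<chi> i. grad (\<lambda>y. c y $ i) x)"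

definition hess :: "(real^'n \<Rightarrow> real) \<Rightarrow> real^'n \<Rightarrow> real^'n^'n" where
  "hess \<phi> x = (\<chi> j k. frechet_derivative (\<lambda>y. frechet_derivative \<phi> (at y) (axis k 1)) (at x) (axis j 1))"

definition Hlag :: "(real^'n \<Rightarrow> real) \<Rightarrow> (real^'n \<Rightarrow> real^'m) \<Rightarrow> real^'n \<Rightarrow> real^'m \<Rightarrow> real^'n^'n" where
  "Hlag f c x lam = hess (\<lambda>y. f y - lam \<bullet> c y) x"

definition active :: "(real^'n \<Rightarrow> real^'m) \<Rightarrow> real^'n \<Rightarrow> 'm set" where
  "active c x = {i. c x $ i = 0}"

text \<open>Perturbed KKT map F^mu; constraints indexed by 'm, inequality indices I, equality indices -I.
  The second block collects C_I(x) lambda_I - mu e (on I) and c_E(x) (on -I).\<close>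
definition Fmu :: "(real^'n \<Rightarrow> real) \<Rightarrow> (real^'n \<Rightarrow> real^'m) \<Rightarrow> 'm set \<Rightarrow> real
    \<Rightarrow> (real^'n) \<times> (real^'m) \<Rightarrow> (real^'n) \<times> (real^'m)" where
  "Fmu f c I \<mu> w = (case w of (x, lam) \<Rightarrow>
     (grad f x - transpose (jac c x) *v lam,
      \<chi> i. if i \<in> I then c x $ i * lam $ i - \<mu> else c x $ i))"

definition nml :: "'a::real_normed_vector \<Rightarrow> 'a" where
  "nml r = (if r = 0 then 0 else r /\<^sub>R norm r)"

end

theory Submission
  imports Defs
begin

text \<open>Since \<open>F\<^sup>\<mu>\<close> differs from \<open>F\<^sup>0\<close> only by the constant \<open>(0, \<mu> e, 0)\<close>, the curve
  \<open>w(\<rho>) = w\<^sup>0((0, \<mu> e, 0) + \<rho> nml r)\<close> solves \<open>F\<^sup>\<mu>(w(\<rho>)) = \<rho> nml r\<close> and starts on the barrier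
  trajectory. It inherits the smoothness of \<open>w\<^sup>0\<close> because it is \<open>w\<^sup>0\<close> composed with an affine map,
  and for small \<open>\<mu>\<close> and \<open>r\<close> the segment \<open>\<rho> \<in> [0, \<parallel>r\<parallel>]\<close> stays inside the neighbourhood of \<open>0\<close>
  on which \<open>w\<^sup>0\<close> is defined.\<close>

lemma Ck_on_cong:
  assumes "open S" "Ck_on S g k" "\<forall>x\<in>S. g x = h x"
  shows "Ck_on S h k"
  using assms(2,3)
proof (induction k arbitrary: g h)
  case 0
  then show ?case using continuous_on_cong by force
next
  case (Suc k)
  have h_deriv: "(h has_derivative frechet_derivative g (at x)) (at x)" if "x \<in> S" for x
    using Suc.prems assms(1) that frechet_derivative_works has_derivative_transform_within_open
    by (metis Ck_on.simps(2))
  then have diff: "\<forall>x\<in>S. h differentiable (at x)"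
    using differentiable_def by blast
  have deriv: "\<forall>x\<in>S. frechet_derivative g (at x) = frechet_derivative h (at x)"
    using h_deriv frechet_derivative_at by blast
  have "Ck_on S (\<lambda>x. frechet_derivative h (at x) v) k" for v
  proof (rule Suc.IH)
    show "Ck_on S (\<lambda>x. frechet_derivative g (at x) v) k"
      using Suc.prems(1) by simp
  qed (simp add: deriv)
  then show ?case using diff by simp
qed

lemma Ck_on_compose_affine:
  fixes A :: "'a::real_normed_vector \<Rightarrow> 'b::real_normed_vector"
  assumes "open V" "Ck_on V g k" "bounded_linear A"
  shows "Ck_on ((\<lambda>x. p + A x) -` V) (\<lambda>x. g (p + A x)) k"
  using assms(2)
proof (induction k arbitrary: g)
  case 0
  have "continuous_on ((\<lambda>x. p + A x) -` V) (\<lambda>x. p + A x)"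
    using assms(3) by (intro continuous_intros linear_continuous_on)
  moreover have "continuous_on V g"
    using 0 by simp
  ultimately show ?case
    by (simp add: continuous_on_compose2[of V g])
next
  case (Suc k)
  let ?U = "(\<lambda>x. p + A x) -` V"
  have open_U: "open ?U"
    using assms by (intro open_vimage continuous_intros linear_continuous_on)
  have deriv: "((\<lambda>x. g (p + A x)) has_derivative
      (\<lambda>t. frechet_derivative g (at (p + A x)) (A t))) (at x)" if "x \<in> ?U" for x
  proof -
    have "(g has_derivative frechet_derivative g (at (p + A x))) (at (p + A x))"
      using Suc.prems that frechet_derivative_works by auto
    moreover have "((\<lambda>x. p + A x) has_derivative A) (at x)"
      using has_derivative_add_const[OF bounded_linear_imp_has_derivative[OF assms(3)], where c = p]
      by (simp add: add.commute)
    ultimately show ?thesis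
      using has_derivative_compose[of "\<lambda>x. p + A x" A x UNIV g] by (simp add: o_def)
  qed
  have "Ck_on ?U (\<lambda>x. frechet_derivative (\<lambda>x. g (p + A x)) (at x) v) k" for v
  proof (rule Ck_on_cong[OF open_U])
    show "Ck_on ?U (\<lambda>x. frechet_derivative g (at (p + A x)) (A v)) k"
      using Suc.IH[of "\<lambda>y. frechet_derivative g (at y) (A v)"] Suc.prems by simp
    show "\<forall>x\<in>?U. frechet_derivative g (at (p + A x)) (A v)
        = frechet_derivative (\<lambda>x. g (p + A x)) (at x) v"
      using deriv frechet_derivative_at by metis
  qed
  moreover have "\<forall>x\<in>?U. (\<lambda>x. g (p + A x)) differentiable (at x)"
    using deriv differentiable_def by blast
  ultimately show ?case
    by simp
qed

lemma Fmu_eq_Fmu_0_minus: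
  "Fmu f c I \<mu> w = Fmu f c I 0 w - (0, \<chi> i. if i \<in> I then \<mu> else 0)"
  by (cases w) (simp add: Fmu_def vec_eq_iff)

lemma Fmu_ray_solution:
  assumes "open V" "Ck_on V W0 k" "\<forall>s\<in>V. Fmu f c I 0 (W0 s) = s"
    and "{0..norm r} \<subseteq> (\<lambda>\<rho>. (0, \<chi> i. if i \<in> I then \<mu> else 0) + \<rho> *\<^sub>R nml r) -` V"
  shows "\<exists>W U. open U \<and> {0..norm r} \<subseteq> U \<and> Ck_on U W k \<and>
           (\<forall>\<rho>\<in>U. Fmu f c I \<mu> (W \<rho>) = \<rho> *\<^sub>R nml r) \<and>
           W 0 = W0 (0, \<chi> i. if i \<in> I then \<mu> else 0)"
proof (intro exI conjI)
  let ?a = "\<lambda>\<rho>::real. (0, \<chi> i. if i \<in> I then \<mu> else 0) + \<rho> *\<^sub>R nml r"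
  show "open (?a -` V)"
    using assms(1) by (intro open_vimage continuous_intros)
  show "Ck_on (?a -` V) (\<lambda>\<rho>. W0 (?a \<rho>)) k"
    using Ck_on_compose_affine[OF assms(1,2) bounded_linear_scaleR_left] .
  show "\<forall>\<rho>\<in>?a -` V. Fmu f c I \<mu> (W0 (?a \<rho>)) = \<rho> *\<^sub>R nml r"
    using assms(3) by (simp add: Fmu_eq_Fmu_0_minus[of f c I \<mu>])
qed (use assms(4) in auto)

lemma norm_nml_le: "norm (nml r) \<le> 1"
  by (simp add: nml_def)

lemma norm_indicator_vec_le:
  "norm (\<chi> i. if i \<in> I then \<mu> else 0 :: real^'m) \<le> real CARD('m) * \<bar>\<mu>\<bar>"
proof -
  have "norm (\<chi> i. if i \<in> I then \<mu> else 0 :: real^'m)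
      \<le> (\<Sum>i\<in>UNIV. \<bar>(\<chi> i. if i \<in> I then \<mu> else 0 :: real^'m) $ i\<bar>)"
    by (rule norm_le_l1_cart)
  also have "\<dots> \<le> (\<Sum>i\<in>(UNIV::'m set). \<bar>\<mu>\<bar>)"
    by (intro sum_mono) auto
  finally show ?thesis by simp
qed

lemma ray_subset_ball:
  fixes p q :: "'a::real_normed_vector"
  assumes "norm q \<le> 1" "norm p + t < \<delta>"
  shows "{0..t} \<subseteq> (\<lambda>\<rho>. p + \<rho> *\<^sub>R q) -` ball 0 \<delta>"
proof
  fix \<rho> assume "\<rho> \<in> {0..t}"
  then have "norm (p + \<rho> *\<^sub>R q) \<le> norm p + t"
    using assms(1) norm_triangle_ineq[of p "\<rho> *\<^sub>R q"] mult_left_le[of "norm q" \<rho>] by auto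
  then show "\<rho> \<in> (\<lambda>\<rho>. p + \<rho> *\<^sub>R q) -` ball 0 \<delta>"
    using assms(2) by simp
qed

theorem corollary1:
  fixes f :: "real^'n \<Rightarrow> real" and c :: "real^'n \<Rightarrow> real^'m" and I :: "'m set"
    and d :: nat and xs :: "real^'n" and ls :: "real^'m"
    and W0 :: "(real^'n) \<times> (real^'m) \<Rightarrow> (real^'n) \<times> (real^'m)"
  assumes d: "d \<ge> 3"
    and smooth_f: "Ck_on UNIV f d"
    and smooth_c: "\<forall>i. Ck_on UNIV (\<lambda>x. c x $ i) d"
    and feas_I: "\<forall>i\<in>I. c xs $ i \<ge> 0"
    and feas_E: "\<forall>i\<in>-I. c xs $ i = 0"
    and LICQ: "\<forall>u. (\<Sum>i\<in>active c xs. u i *\<^sub>R grad (\<lambda>x. c x $ i) xs) = 0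
                   \<longrightarrow> (\<forall>i\<in>active c xs. u i = 0)"
    and stat: "grad f xs = transpose (jac c xs) *v ls"
    and compl: "\<forall>i\<in>I. c xs $ i * ls $ i = 0"
    and nonneg: "\<forall>i\<in>I. ls $ i \<ge> 0"
    and strict: "\<forall>i\<in>I \<inter> active c xs. ls $ i > 0"
    and SOSC: "\<exists>\<omega>>0. \<forall>p. (\<forall>i\<in>active c xs. grad (\<lambda>x. c x $ i) xs \<bullet> p = 0)
                   \<longrightarrow> p \<bullet> (Hlag f c xs ls *v p) \<ge> \<omega> * (norm p)\<^sup>2"
    and W0: "\<exists>V. open V \<and> 0 \<in> V \<and> Ck_on V W0 (d - 1) \<and>
               (\<forall>r\<in>V. Fmu f c I 0 (W0 r) = r) \<and> W0 0 = (xs, ls)"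
  shows "\<exists>\<epsilon>>0. \<forall>\<mu> r. \<bar>\<mu>\<bar> < \<epsilon> \<and> norm r < \<epsilon> \<longrightarrow>
           (\<exists>W :: real \<Rightarrow> (real^'n) \<times> (real^'m). \<exists>U. open U \<and> {0..norm r} \<subseteq> U \<and>
              Ck_on U W (d - 1) \<and>
              (\<forall>\<rho>\<in>U. Fmu f c I \<mu> (W \<rho>) = \<rho> *\<^sub>R nml r) \<and>
              W 0 = W0 (0, \<chi> i. if i \<in> I then \<mu> else 0))"
proof -
  obtain V where V: "open V" "0 \<in> V" "Ck_on V W0 (d - 1)" "\<forall>s\<in>V. Fmu f c I 0 (W0 s) = s"
    using W0 by blast
  then obtain \<delta> where \<delta>: "\<delta> > 0" "ball 0 \<delta> \<subseteq> V"
    using open_contains_ball by blast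
  define \<epsilon> where "\<epsilon> = \<delta> / (real CARD('m) + 1)"
  have card_pos: "real CARD('m) + 1 > 0"
    by simp
  have ray_in_V: "{0..norm r} \<subseteq> (\<lambda>\<rho>. (0, \<chi> i. if i \<in> I then \<mu> else 0) + \<rho> *\<^sub>R nml r) -` V"
    if "\<bar>\<mu>\<bar> < \<epsilon>" "norm r < \<epsilon>" for \<mu> and r :: "(real^'n) \<times> (real^'m)"
  proof -
    have "norm (0::real^'n, \<chi> i. if i \<in> I then \<mu> else 0 :: real^'m) + norm r
        \<le> real CARD('m) * \<bar>\<mu>\<bar> + norm r"
      using norm_indicator_vec_le[of I \<mu>] by (simp add: norm_Pair)
    also have "\<dots> < real CARD('m) * \<epsilon> + \<epsilon>"
      using that by (intro add_le_less_mono mult_left_mono) auto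
    also have "\<dots> = (real CARD('m) + 1) * \<epsilon>"
      by (simp add: algebra_simps)
    also have "\<dots> = \<delta>"
      using card_pos by (simp add: \<epsilon>_def)
    finally show ?thesis
      using ray_subset_ball[OF norm_nml_le] \<delta>(2) by blast
  qed
  show ?thesis
  proof (intro exI[of _ \<epsilon>] conjI allI impI)
    show "\<epsilon> > 0"
      using \<delta>(1) card_pos by (simp add: \<epsilon>_def)
  qed (rule Fmu_ray_solution[OF V(1,3,4) ray_in_V]; simp)
qed

end
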